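(* Let $(X,T)$ and $(Y,S)$ be minimal topological dynamical systems with $T$ a homeomorphism, and let $\pi: X\to Y$ be a factor map. If $\pi$ is proximal and not almost one-to-one, then $(X,T)$ is strongly $\mathcal{F}_{ip}$-sensitive.
   Context: A topological dynamical system: compact metric space $(X,d)$ with continuous surjection $T$; minimal means every orbit is dense. A factor map $\pi$ is a continuous surjection with $\pi\circ T=S\circ\pi$. A pair $(x,y)$ is proximal if $\inf_n d(T^nx,T^ny)=0$; $\pi$ is proximal if all pairs in the same fiber are proximal; $\pi$ is almost one-to-one if $\{x:\pi^{-1}(\pi(x))=\{x\}\}$ is dense. $\mathcal{F}_{ip}$ is the family of subsets of $\mathbb{Z}_+$ containing some $FS((p_i)_{i=1}^\infty)=\{\sum_{i\in\alpha}p_i:\alpha\subset\mathbb{N}$ finite nonempty$\}$, $p_i\in\mathbb{N}$. $(X,T)$ is strongly $\mathcal{F}_{ip}$-sensitive if there is $\delta>0$ such that for each nonempty open $U$ there are $x,y\in U$ with $\{n\in\mathbb{Z}_+:d(T^nx,T^ny)>\delta\}\in\mathcal{F}_{ip}$. *)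

theory Defs
  imports "HOL-Analysis.Analysis"
begin

definition tds :: "'a::metric_space set \<Rightarrow> ('a \<Rightarrow> 'a) \<Rightarrow> bool" where
  "tds X T \<longleftrightarrow> compact X \<and> X \<noteq> {} \<and> continuous_on X T \<and> T ` X = X"

definition minimal_tds :: "'a::metric_space set \<Rightarrow> ('a \<Rightarrow> 'a) \<Rightarrow> bool" where
  "minimal_tds X T \<longleftrightarrow> tds X T \<and>
     (\<forall>x\<in>X. closure {(T ^^ n) x | n. True} = X)"

definition factor_map ::
  "'a::metric_space set \<Rightarrow> ('a \<Rightarrow> 'a) \<Rightarrow> 'b::metric_space set \<Rightarrow> ('b \<Rightarrow> 'b) \<Rightarrow> ('a \<Rightarrow> 'b) \<Rightarrow> bool" where
  "factor_map X T Y S \<pi> \<longleftrightarrow> continuous_on X \<pi> \<and> \<pi> ` X = Y \<and> (\<forall>x\<in>X. \<pi> (T x) = S (\<pi> x))"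

definition proximal_pair :: "('a::metric_space \<Rightarrow> 'a) \<Rightarrow> 'a \<Rightarrow> 'a \<Rightarrow> bool" where
  "proximal_pair T x y \<longleftrightarrow> (INF n. dist ((T ^^ n) x) ((T ^^ n) y)) = 0"

definition proximal_factor ::
  "'a::metric_space set \<Rightarrow> ('a \<Rightarrow> 'a) \<Rightarrow> ('a \<Rightarrow> 'b) \<Rightarrow> bool" where
  "proximal_factor X T \<pi> \<longleftrightarrow> (\<forall>x\<in>X. \<forall>y\<in>X. \<pi> x = \<pi> y \<longrightarrow> proximal_pair T x y)"

definition almost_one_to_one :: "'a::metric_space set \<Rightarrow> ('a \<Rightarrow> 'b) \<Rightarrow> bool" where
  "almost_one_to_one X \<pi> \<longleftrightarrow> X \<subseteq> closure {x\<in>X. {x'\<in>X. \<pi> x' = \<pi> x} = {x}}"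

definition FS :: "(nat \<Rightarrow> nat) \<Rightarrow> nat set" where
  "FS p = {(\<Sum>i\<in>\<alpha>. p i) | \<alpha>. finite \<alpha> \<and> \<alpha> \<noteq> {}}"

definition F_ip :: "nat set set" where
  "F_ip = {A. \<exists>p. (\<forall>i. p i \<ge> 1) \<and> FS p \<subseteq> A}"

definition strongly_Fip_sensitive :: "'a::metric_space set \<Rightarrow> ('a \<Rightarrow> 'a) \<Rightarrow> bool" where
  "strongly_Fip_sensitive X T \<longleftrightarrow> (\<exists>\<delta>>0. \<forall>U. openin (top_of_set X) U \<and> U \<noteq> {} \<longrightarrow>
     (\<exists>x\<in>U. \<exists>y\<in>U. {n. dist ((T ^^ n) x) ((T ^^ n) y) > \<delta>} \<in> F_ip))"

end

(*
  Since pi is not almost one-to-one, Baire category yields an open set of points having a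
  fiber-mate at distance at least c; minimality of the inverse map carries every point into this
  set within a bounded number of backward steps, and uniform continuity of these finitely many
  maps gives an eta > 0 such that every x in X has a fiber-mate x' with d(x, x') >= eta.

  Proximality of (x, x') collapses them under some element of the Ellis enveloping semigroup,
  and the Ellis-Numakura lemma turns this into an idempotent u with u x = u x' = x'. Fixed
  points of u are dense, so some y close to x has u y = y. Along the times n with T^n -> u,
  both (T^n x, T^n y) and (T^n x', T^n y) return close to the eta/2-separated pair (x', y);
  a Hindman-type recursion then produces an IP set of times separating x from y.
*)
theory Submission
  imports Defs
begin

lemma compact_imp_closed_fun:
  fixes S :: "('a \<Rightarrow> 'b::t2_space) set"
  assumes "compact S"
  shows "closed S"
proof -
  have "Hausdorff_space (euclidean :: 'b topology)"
    using hausdorff by (simp add: Hausdorff_space_def disjnt_def) blast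
  then have "Hausdorff_space (product_topology (\<lambda>i. euclidean::'b topology) (UNIV::'a set))"
    by (simp add: Hausdorff_space_product_topology)
  moreover have "compactin (product_topology (\<lambda>i. euclidean) UNIV) S"
    using assms by (simp add: euclidean_product_topology)
  ultimately have "closedin (product_topology (\<lambda>i. euclidean) UNIV) S"
    by (rule compactin_imp_closedin)
  then show ?thesis
    by (simp add: euclidean_product_topology)
qed

lemma tendsto_fun_iff:
  fixes f :: "'x \<Rightarrow> 'a \<Rightarrow> 'b::topological_space"
  shows "(f \<longlongrightarrow> l) F \<longleftrightarrow> (\<forall>i. ((\<lambda>x. f x i) \<longlongrightarrow> l i) F)"
  using limitin_componentwise[of "\<lambda>_. euclidean" UNIV f l F]
  by (simp add: euclidean_product_topology)

lemma continuous_on_comp_right: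
  "continuous_on UNIV (\<lambda>p::'a \<Rightarrow> 'b::topological_space. p \<circ> q)"
  by (intro continuous_on_coordinatewise_then_product) (simp add: comp_def)

definition closed_subsemigroup :: "('a \<Rightarrow> 'a::topological_space) set \<Rightarrow> bool" where
  "closed_subsemigroup B \<longleftrightarrow> closed B \<and> B \<noteq> {} \<and> (\<forall>p\<in>B. \<forall>q\<in>B. p \<circ> q \<in> B)"

lemma closed_subsemigroup_Inter_chain:
  assumes "compact A" "\<C> \<noteq> {}" "subset.chain UNIV \<C>"
    and members: "\<And>B. B \<in> \<C> \<Longrightarrow> B \<subseteq> A \<and> closed_subsemigroup B"
  shows "closed_subsemigroup (\<Inter>\<C>)"
proof -
  have closed_members: "closed B" if "B \<in> \<C>" for B
    using members[OF that] by (simp add: closed_subsemigroup_def)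
  have "A \<inter> \<Inter>\<C> \<noteq> {}"
  proof (rule compact_imp_fip[OF assms(1) closed_members])
    fix \<F> assume "finite \<F>" "\<F> \<subseteq> \<C>"
    show "A \<inter> \<Inter>\<F> \<noteq> {}"
    proof (cases "\<F> = {}")
      case True
      obtain B where "B \<in> \<C>"
        using assms(2) by blast
      then have "B \<subseteq> A" "B \<noteq> {}"
        using members by (auto simp: closed_subsemigroup_def)
      then show ?thesis
        using True by auto
    next
      case False
      then have "\<Inter>\<F> \<in> \<C>"
        using Inter_in_chain[OF \<open>finite \<F>\<close>] assms(3) \<open>\<F> \<subseteq> \<C>\<close>
        by (meson subset.chain_def subset_iff)
      then have "\<Inter>\<F> \<subseteq> A" "\<Inter>\<F> \<noteq> {}"
        using members by (auto simp: closed_subsemigroup_def)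
      then show ?thesis
        by auto
    qed
  qed (use closed_members in auto)
  moreover have "\<forall>p\<in>\<Inter>\<C>. \<forall>q\<in>\<Inter>\<C>. p \<circ> q \<in> \<Inter>\<C>"
    using members by (auto simp: closed_subsemigroup_def)
  ultimately show ?thesis
    using closed_members by (auto simp: closed_subsemigroup_def)
qed

lemma minimal_closed_subsemigroup:
  assumes "compact A" "closed_subsemigroup A"
  obtains B where "B \<subseteq> A" "closed_subsemigroup B"
    "\<And>B'. closed_subsemigroup B' \<Longrightarrow> B' \<subseteq> B \<Longrightarrow> B' = B"
proof -
  define \<S> where "\<S> = {B. B \<subseteq> A \<and> closed_subsemigroup B}"
  have "\<exists>B\<in>\<S>. \<forall>B'\<in>\<S>. B' \<subseteq> B \<longrightarrow> B' = B"
  proof (rule predicate_Zorn)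
    show "partial_order_on \<S> (relation_of (\<lambda>B B'. B' \<subseteq> B) \<S>)"
      by (rule partial_order_on_relation_ofI) auto
  next
    fix \<C> assume \<C>: "\<C> \<in> Chains (relation_of (\<lambda>B B'. B' \<subseteq> B) \<S>)"
    then have "\<C> \<subseteq> \<S>" "subset.chain UNIV \<C>"
      by (auto simp: subset_chain_def Chains_def relation_of_def)
    then have "\<Inter>\<C> \<in> \<S>" if "\<C> \<noteq> {}"
      using closed_subsemigroup_Inter_chain[OF assms(1) that] that by (auto simp: \<S>_def)
    then show "\<exists>B\<in>\<S>. \<forall>C\<in>\<C>. B \<subseteq> C"
      using assms(2) by (cases "\<C> = {}") (auto simp: \<S>_def)
  qed
  then show ?thesis
    using that by (auto simp: \<S>_def)
qed

text \<open>The Ellis--Numakura lemma; composition need only be continuous in its left argument.\<close>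
lemma compact_semigroup_has_idempotent:
  fixes A :: "('a \<Rightarrow> 'a::t2_space) set"
  assumes "compact A" "A \<noteq> {}" "\<And>p q. p \<in> A \<Longrightarrow> q \<in> A \<Longrightarrow> p \<circ> q \<in> A"
  shows "\<exists>u\<in>A. u \<circ> u = u"
proof -
  have "closed_subsemigroup A"
    using assms compact_imp_closed_fun by (auto simp: closed_subsemigroup_def)
  then obtain B where BA: "B \<subseteq> A" and B: "closed_subsemigroup B"
    and minimal: "\<And>B'. closed_subsemigroup B' \<Longrightarrow> B' \<subseteq> B \<Longrightarrow> B' = B"
    using minimal_closed_subsemigroup[OF assms(1)] by blast
  then obtain b where b: "b \<in> B"
    by (auto simp: closed_subsemigroup_def)
  have comp_B: "p \<circ> q \<in> B" if "p \<in> B" "q \<in> B" for p q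
    using B that by (simp add: closed_subsemigroup_def)
  have "compact B"
    using B BA compact_Int_closed[OF assms(1)] by (metis closed_subsemigroup_def inf.absorb_iff2)
  then have "compact ((\<lambda>p. p \<circ> b) ` B)"
    by (rule compact_continuous_image[OF continuous_on_subset[OF continuous_on_comp_right], rotated]) simp
  moreover have "p \<circ> b \<circ> (q \<circ> b) = (p \<circ> (b \<circ> q)) \<circ> b" for p q
    by (simp add: comp_assoc)
  ultimately have "closed_subsemigroup ((\<lambda>p. p \<circ> b) ` B)"
    using b comp_B compact_imp_closed_fun by (auto simp: closed_subsemigroup_def intro!: image_eqI)
  then have "(\<lambda>p. p \<circ> b) ` B = B"
    using minimal b comp_B by blast
  then obtain c where c: "c \<in> B" "c \<circ> b = b"
    using b by (metis imageE)
  define B\<^sub>b where "B\<^sub>b = {p\<in>B. p \<circ> b = b}"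
  have "B\<^sub>b = B \<inter> (\<Inter>z. {p. p (b z) = b z})"
    by (auto simp: B\<^sub>b_def fun_eq_iff)
  then have "closed B\<^sub>b"
    using B by (auto simp: closed_subsemigroup_def intro!: closed_Int closed_INT closed_Collect_eq)
  then have "closed_subsemigroup B\<^sub>b"
    using c comp_B by (auto simp: B\<^sub>b_def closed_subsemigroup_def comp_assoc)
  then have "B\<^sub>b = B"
    using minimal by (auto simp: B\<^sub>b_def)
  then show ?thesis
    using b BA by (auto simp: B\<^sub>b_def)
qed

definition FS_upto :: "(nat \<Rightarrow> nat) \<Rightarrow> nat \<Rightarrow> nat set" where
  "FS_upto p k = {(\<Sum>i\<in>\<alpha>. p i) | \<alpha>. \<alpha> \<subseteq> {..<k} \<and> \<alpha> \<noteq> {}}"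

lemma FS_upto_0 [simp]: "FS_upto p 0 = {}"
  by (simp add: FS_upto_def)

lemma FS_upto_Suc_subset:
  "FS_upto p (Suc k) \<subseteq> FS_upto p k \<union> (\<lambda>s. s + p k) ` insert 0 (FS_upto p k)"
proof
  fix s assume "s \<in> FS_upto p (Suc k)"
  then obtain \<alpha> where s: "s = sum p \<alpha>" and \<alpha>: "\<alpha> \<subseteq> {..<Suc k}" "\<alpha> \<noteq> {}"
    by (auto simp: FS_upto_def)
  show "s \<in> FS_upto p k \<union> (\<lambda>s. s + p k) ` insert 0 (FS_upto p k)"
  proof (cases "k \<in> \<alpha>")
    case False
    then have "\<alpha> \<subseteq> {..<k}"
      using \<alpha> by (auto simp: less_Suc_eq)
    then show ?thesis
      using s \<alpha> by (auto simp: FS_upto_def)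
  next
    case True
    have "finite \<alpha>"
      using \<alpha> finite_subset by blast
    then have "s = sum p (\<alpha> - {k}) + p k"
      using s True by (simp add: sum.remove add.commute)
    moreover have "\<alpha> - {k} \<subseteq> {..<k}"
      using \<alpha> by (auto simp: less_Suc_eq)
    moreover have "sum p (\<alpha> - {k}) \<in> insert 0 (FS_upto p k)"
      using \<open>\<alpha> - {k} \<subseteq> {..<k}\<close> by (cases "\<alpha> - {k} = {}") (auto simp: FS_upto_def)
    ultimately show ?thesis
      by blast
  qed
qed

lemma FS_upto_Suc_supset:
  "FS_upto p k \<union> (\<lambda>s. s + p k) ` insert 0 (FS_upto p k) \<subseteq> FS_upto p (Suc k)"
proof
  fix s assume "s \<in> FS_upto p k \<union> (\<lambda>s. s + p k) ` insert 0 (FS_upto p k)"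
  then consider "s \<in> FS_upto p k" | "s = p k" | t where "t \<in> FS_upto p k" "s = t + p k"
    by auto
  then show "s \<in> FS_upto p (Suc k)"
  proof cases
    case 1
    then obtain \<alpha> where "s = sum p \<alpha>" "\<alpha> \<subseteq> {..<k}" "\<alpha> \<noteq> {}"
      by (auto simp: FS_upto_def)
    then show ?thesis
      unfolding FS_upto_def by (intro CollectI exI[of _ \<alpha>]) auto
  next
    case 2
    then show ?thesis
      unfolding FS_upto_def by (intro CollectI exI[of _ "{k}"]) auto
  next
    case 3
    then obtain \<alpha> where "s = sum p \<alpha> + p k" "\<alpha> \<subseteq> {..<k}" "\<alpha> \<noteq> {}"
      by (auto simp: FS_upto_def)
    moreover have "finite \<alpha>" "k \<notin> \<alpha>"
      using \<open>\<alpha> \<subseteq> {..<k}\<close> finite_subset by auto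
    ultimately show ?thesis
      unfolding FS_upto_def by (intro CollectI exI[of _ "insert k \<alpha>"]) auto
  qed
qed

lemma FS_upto_Suc:
  "FS_upto p (Suc k) = FS_upto p k \<union> (\<lambda>s. s + p k) ` insert 0 (FS_upto p k)"
  by (rule equalityI[OF FS_upto_Suc_subset FS_upto_Suc_supset])

lemma FS_eq_UN_FS_upto: "FS p = (\<Union>k. FS_upto p k)"
proof (intro equalityI subsetI)
  fix s assume "s \<in> FS p"
  then obtain \<alpha> where "s = sum p \<alpha>" "finite \<alpha>" "\<alpha> \<noteq> {}"
    by (auto simp: FS_def)
  moreover have "\<alpha> \<subseteq> {..<Suc (Max \<alpha>)}"
    using \<open>finite \<alpha>\<close> by (auto simp: less_Suc_eq_le)
  ultimately show "s \<in> (\<Union>k. FS_upto p k)"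
    by (auto simp: FS_upto_def)
qed (auto simp: FS_def FS_upto_def finite_subset)

lemma F_ip_mono: "A \<in> F_ip \<Longrightarrow> A \<subseteq> B \<Longrightarrow> B \<in> F_ip"
  by (auto simp: F_ip_def)

text \<open>The generator \<open>p k\<close> comes from the hypothesis applied to \<open>St k\<close>, the finite set of sums
  of the first \<open>k\<close> generators.\<close>
lemma F_ip_if_translates:
  assumes "\<And>F. finite F \<Longrightarrow> F \<subseteq> A \<Longrightarrow> \<exists>n\<ge>1. (\<lambda>s. s + n) ` insert 0 F \<subseteq> A"
  shows "A \<in> F_ip"
proof -
  obtain step where step: "\<And>F. finite F \<Longrightarrow> F \<subseteq> A \<Longrightarrow> step F \<ge> 1 \<and> (\<lambda>s. s + step F) ` insert 0 F \<subseteq> A"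
    using assms by metis
  define St where "St = rec_nat {} (\<lambda>_ F. F \<union> (\<lambda>s. s + step F) ` insert 0 F)"
  define p where "p k = step (St k)" for k
  have St: "St k = FS_upto p k \<and> finite (St k) \<and> St k \<subseteq> A" for k
  proof (induction k)
    case (Suc k)
    have "St (Suc k) = St k \<union> (\<lambda>s. s + p k) ` insert 0 (St k)"
      by (simp add: St_def p_def)
    moreover have "(\<lambda>s. s + step (St k)) ` insert 0 (St k) \<subseteq> A"
      using Suc step by blast
    then have "(\<lambda>s. s + p k) ` insert 0 (St k) \<subseteq> A"
      by (simp add: p_def)
    moreover have "St k = FS_upto p k" "finite (St k)" "St k \<subseteq> A"
      using Suc by auto
    ultimately show ?case
      by (auto simp: FS_upto_Suc)
  qed (simp add: St_def)
  have St_eq: "St k = FS_upto p k" and finite_St: "finite (St k)" and St_A: "St k \<subseteq> A" for k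
    using St by blast+
  have "p k \<ge> 1" for k
    unfolding p_def using step finite_St St_A by blast
  moreover have "FS p \<subseteq> A"
    using St_eq St_A by (auto simp: FS_eq_UN_FS_upto)
  ultimately show ?thesis
    by (auto simp: F_ip_def)
qed

lemma proximal_pair_returns:
  assumes "proximal_pair T x y" "x \<noteq> y" "\<epsilon> > 0"
  obtains n where "n \<ge> 1" "dist ((T ^^ n) x) ((T ^^ n) y) < \<epsilon>"
proof -
  have "bdd_below (range (\<lambda>n. dist ((T ^^ n) x) ((T ^^ n) y)))"
    by (rule bdd_belowI[of _ 0]) auto
  moreover have "(INF n. dist ((T ^^ n) x) ((T ^^ n) y)) < min \<epsilon> (dist x y)"
    using assms by (simp add: proximal_pair_def)
  ultimately obtain n where "dist ((T ^^ n) x) ((T ^^ n) y) < min \<epsilon> (dist x y)"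
    using cINF_less_iff by blast
  moreover have "n \<noteq> 0"
    using calculation by (cases n) auto
  ultimately show ?thesis
    by (intro that[of n]) auto
qed

locale dynamical_system =
  fixes X :: "'a::metric_space set" and T :: "'a \<Rightarrow> 'a"
  assumes tds: "tds X T"
begin

lemma compact_X: "compact X"
  and X_nonempty: "X \<noteq> {}"
  and continuous_T: "continuous_on X T"
  and T_image_eq: "T ` X = X"
  using tds by (auto simp: tds_def)

lemma closed_X: "closed X"
  using compact_X by (rule compact_imp_closed)

lemma funpow_in: "x \<in> X \<Longrightarrow> (T ^^ n) x \<in> X"
  using T_image_eq by (induction n) auto

lemma funpow_image_eq: "(T ^^ n) ` X = X"
proof (induction n)
  case (Suc n)
  then show ?case
    using T_image_eq by (metis funpow.simps(2) image_comp)
qed simp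

lemma continuous_on_funpow: "continuous_on X (T ^^ n)"
proof (induction n)
  case (Suc n)
  have "continuous_on X (T \<circ> T ^^ n)"
    by (intro continuous_on_compose Suc continuous_on_subset[OF continuous_T])
      (auto simp: funpow_in)
  then show ?case
    by simp
qed simp

lemma funpow_image_subset: "T ` U \<subseteq> U \<Longrightarrow> (T ^^ n) ` U \<subseteq> U"
  by (induction n) (auto simp: image_subset_iff)

text \<open>\<open>T\<close> is extended by the identity off \<open>X\<close>, so that all iterates lie in the compact set
  \<open>self_maps\<close> of the product space \<open>'a \<Rightarrow> 'a\<close>.\<close>
definition T_ext :: "'a \<Rightarrow> 'a" where
  "T_ext z = (if z \<in> X then T z else z)"

definition self_maps :: "('a \<Rightarrow> 'a) set" where
  "self_maps = {f. \<forall>z. f z \<in> (if z \<in> X then X else {z})}"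

definition envelope :: "('a \<Rightarrow> 'a) set" where
  "envelope = closure {T_ext ^^ n | n. n \<ge> 1}"

text \<open>The function space is not first countable, so convergence of \<open>T_ext ^^ n\<close> to
  \<open>u \<in> envelope\<close> is expressed along this filter of return times instead of a subsequence.\<close>
definition returns :: "('a \<Rightarrow> 'a) \<Rightarrow> nat filter" where
  "returns u = inf (filtercomap (\<lambda>n. T_ext ^^ n) (nhds u)) (principal {1..})"

lemma T_ext_funpow: "x \<in> X \<Longrightarrow> (T_ext ^^ n) x = (T ^^ n) x"
  by (induction n) (auto simp: T_ext_def funpow_in)

lemma T_ext_funpow_outside: "x \<notin> X \<Longrightarrow> (T_ext ^^ n) x = x"
  by (induction n) (auto simp: T_ext_def)

lemma compact_self_maps: "compact self_maps"
proof -
  have "self_maps = PiE UNIV (\<lambda>z. if z \<in> X then X else {z})"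
    unfolding self_maps_def PiE_UNIV_domain Pi_def by auto
  moreover have "compactin (product_topology (\<lambda>_. euclidean) UNIV) (PiE UNIV (\<lambda>z. if z \<in> X then X else {z}))"
    by (subst compactin_PiE) (auto simp: compact_X)
  ultimately show ?thesis
    by (simp add: euclidean_product_topology)
qed

lemma T_ext_funpow_in_envelope: "n \<ge> 1 \<Longrightarrow> T_ext ^^ n \<in> envelope"
  unfolding envelope_def by (rule closure_subset[THEN subsetD]) auto

lemma eventually_returns_ge_1: "eventually (\<lambda>n. n \<ge> 1) (returns u)"
  by (auto simp: returns_def eventually_inf_principal)

lemma tendsto_returns: "((\<lambda>n. T_ext ^^ n) \<longlongrightarrow> u) (returns u)"
  unfolding returns_def by (rule filterlim_mono[OF filterlim_filtercomap order_refl inf_le1])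

lemma returns_neq_bot:
  assumes "u \<in> envelope"
  shows "returns u \<noteq> bot"
proof
  assume "returns u = bot"
  then obtain S where "open S" "u \<in> S" "\<forall>n. T_ext ^^ n \<in> S \<longrightarrow> \<not> 1 \<le> n"
    by (auto simp: trivial_limit_def returns_def eventually_inf_principal eventually_filtercomap_nhds)
  then have "S \<inter> {T_ext ^^ n | n. n \<ge> 1} = {}"
    by fastforce
  then show False
    using assms \<open>open S\<close> \<open>u \<in> S\<close> open_Int_closure_eq_empty by (fastforce simp: envelope_def)
qed

lemma tendsto_returns_apply: "((\<lambda>n. (T_ext ^^ n) x) \<longlongrightarrow> u x) (returns u)"
  using tendsto_returns[of u, unfolded tendsto_fun_iff] by blast

lemma tendsto_returns_orbit: "x \<in> X \<Longrightarrow> ((\<lambda>n. (T ^^ n) x) \<longlongrightarrow> u x) (returns u)"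
  using tendsto_returns_apply[of x u] by (simp add: T_ext_funpow)

lemma envelope_apply_in:
  assumes "u \<in> envelope" "x \<in> X"
  shows "u x \<in> X"
  using Lim_in_closed_set[OF closed_X _ returns_neq_bot[OF assms(1)] tendsto_returns_orbit[OF assms(2)]]
  by (simp add: funpow_in assms(2))

lemma envelope_apply_outside:
  assumes "u \<in> envelope" "x \<notin> X"
  shows "u x = x"
  using tendsto_unique[OF returns_neq_bot[OF assms(1)] tendsto_returns_apply[of x u]] assms(2)
  by (simp add: T_ext_funpow_outside)

lemma compact_envelope: "compact envelope"
proof -
  have "envelope \<subseteq> self_maps"
    using envelope_apply_in envelope_apply_outside by (auto simp: self_maps_def)
  then have "envelope = self_maps \<inter> envelope"
    by blast
  also have "compact \<dots>"
    by (intro compact_Int_closed compact_self_maps) (simp add: envelope_def)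
  finally show ?thesis .
qed

lemma envelope_commute:
  assumes "u \<in> envelope" "x \<in> X"
  shows "T (u x) = u (T x)"
proof -
  have "((\<lambda>n. T ((T ^^ n) x)) \<longlongrightarrow> T (u x)) (returns u)"
    by (rule continuous_on_tendsto_compose[OF continuous_T tendsto_returns_orbit[OF assms(2), of u]
          envelope_apply_in[OF assms]]) (simp add: funpow_in assms(2))
  moreover have "((\<lambda>n. T ((T ^^ n) x)) \<longlongrightarrow> u (T x)) (returns u)"
    using tendsto_returns_orbit[of "T x" u] assms(2) T_image_eq by (auto simp: funpow_swap1)
  ultimately show ?thesis
    using returns_neq_bot[OF assms(1)] tendsto_unique by blast
qed

lemma envelope_commute_funpow:
  assumes "u \<in> envelope" "x \<in> X"
  shows "(T ^^ n) (u x) = u ((T ^^ n) x)"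
  using assms by (induction n) (auto simp: envelope_commute funpow_in)

lemma T_ext_funpow_comp_in_envelope:
  assumes "q \<in> envelope"
  shows "T_ext ^^ m \<circ> q \<in> envelope"
proof (rule Lim_in_closed_set)
  show "eventually (\<lambda>n. T_ext ^^ m \<circ> T_ext ^^ n \<in> envelope) (returns q)"
    using eventually_returns_ge_1
    by eventually_elim (auto simp flip: funpow_add intro: T_ext_funpow_in_envelope)
  have "((\<lambda>n. (T_ext ^^ m) ((T_ext ^^ n) x)) \<longlongrightarrow> (T_ext ^^ m) (q x)) (returns q)" for x
  proof (cases "x \<in> X")
    case True
    have "((\<lambda>n. (T ^^ m) ((T ^^ n) x)) \<longlongrightarrow> (T ^^ m) (q x)) (returns q)"
      by (rule continuous_on_tendsto_compose[OF continuous_on_funpow tendsto_returns_orbit[OF True, of q]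
            envelope_apply_in[OF assms True]]) (simp add: funpow_in True)
    then show ?thesis
      using True assms by (simp add: T_ext_funpow funpow_in envelope_apply_in)
  next
    case False
    then show ?thesis
      using assms by (simp add: T_ext_funpow_outside envelope_apply_outside)
  qed
  then show "((\<lambda>n. T_ext ^^ m \<circ> T_ext ^^ n) \<longlongrightarrow> T_ext ^^ m \<circ> q) (returns q)"
    by (simp add: tendsto_fun_iff)
qed (use assms returns_neq_bot in \<open>auto simp: envelope_def\<close>)

lemma envelope_comp:
  assumes "p \<in> envelope" "q \<in> envelope"
  shows "p \<circ> q \<in> envelope"
proof (rule Lim_in_closed_set)
  show "eventually (\<lambda>n. T_ext ^^ n \<circ> q \<in> envelope) (returns p)"
    using assms(2) T_ext_funpow_comp_in_envelope by simp
  show "((\<lambda>n. T_ext ^^ n \<circ> q) \<longlongrightarrow> p \<circ> q) (returns p)"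
    using tendsto_returns_apply by (simp add: tendsto_fun_iff)
qed (use assms returns_neq_bot in \<open>auto simp: envelope_def\<close>)

lemma envelope_collapses_proximal:
  assumes "x \<in> X" "y \<in> X" and close: "\<And>\<epsilon>. \<epsilon> > 0 \<Longrightarrow> \<exists>n\<ge>1. dist ((T ^^ n) x) ((T ^^ n) y) < \<epsilon>"
  shows "\<exists>p\<in>envelope. p x = p y"
proof -
  define C where "C \<epsilon> = {f::'a \<Rightarrow> 'a. dist (f x) (f y) \<le> \<epsilon>}" for \<epsilon>
  have "closed (C \<epsilon>)" for \<epsilon>
    unfolding C_def by (intro closed_Collect_le continuous_intros) auto
  have "envelope \<inter> \<Inter>(C ` {0<..}) \<noteq> {}"
  proof (rule compact_imp_fip[OF compact_envelope])
    fix \<F> assume "finite \<F>" "\<F> \<subseteq> C ` {0<..}"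
    then obtain K where K: "finite K" "K \<subseteq> {0<..}" "\<F> = C ` K"
      by (meson finite_subset_image)
    have "0 < Min (insert 1 K)"
      using K by (simp add: subset_iff)
    then obtain n where "n \<ge> 1" "dist ((T ^^ n) x) ((T ^^ n) y) < Min (insert 1 K)"
      using close by blast
    then have "T_ext ^^ n \<in> envelope \<inter> \<Inter>\<F>"
      using K assms by (fastforce simp: C_def T_ext_funpow T_ext_funpow_in_envelope)
    then show "envelope \<inter> \<Inter>\<F> \<noteq> {}"
      by blast
  qed (use \<open>\<And>\<epsilon>. closed (C \<epsilon>)\<close> in auto)
  then obtain p where "p \<in> envelope" "\<And>\<epsilon>. \<epsilon> > 0 \<Longrightarrow> dist (p x) (p y) \<le> \<epsilon>"
    by (auto simp: C_def)
  then show ?thesis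
    by (metis dist_le_zero_iff field_le_epsilon add_0)
qed

lemma eventually_separated:
  assumes "x \<in> X" "y \<in> X" "x' \<in> X" "y' \<in> X"
    and "((\<lambda>n. (T ^^ n) x) \<longlongrightarrow> x') F" "((\<lambda>n. (T ^^ n) y) \<longlongrightarrow> y') F"
    and "\<delta> < dist ((T ^^ s) x') ((T ^^ s) y')"
  shows "eventually (\<lambda>n. \<delta> < dist ((T ^^ (s + n)) x) ((T ^^ (s + n)) y)) F"
proof -
  have "((\<lambda>n. (T ^^ s) ((T ^^ n) x)) \<longlongrightarrow> (T ^^ s) x') F"
    "((\<lambda>n. (T ^^ s) ((T ^^ n) y)) \<longlongrightarrow> (T ^^ s) y') F"
    using assms funpow_in by (auto intro!: continuous_on_tendsto_compose[OF continuous_on_funpow])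
  then have "((\<lambda>n. dist ((T ^^ s) ((T ^^ n) x)) ((T ^^ s) ((T ^^ n) y)))
      \<longlongrightarrow> dist ((T ^^ s) x') ((T ^^ s) y')) F"
    by (rule tendsto_dist)
  from order_tendstoD(1)[OF this assms(7)] show ?thesis
    by (simp add: funpow_add)
qed

lemma separation_times_F_ip:
  assumes "x \<in> X" "y \<in> X" "x' \<in> X" "y' \<in> X" "\<delta> < dist x' y'"
    and "F \<noteq> bot" "eventually (\<lambda>n. n \<ge> 1) F"
    and "((\<lambda>n. (T ^^ n) x) \<longlongrightarrow> x') F" "((\<lambda>n. (T ^^ n) y) \<longlongrightarrow> y') F"
    and "((\<lambda>n. (T ^^ n) x') \<longlongrightarrow> x') F" "((\<lambda>n. (T ^^ n) y') \<longlongrightarrow> y') F"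
  shows "{n. \<delta> < dist ((T ^^ n) x) ((T ^^ n) y)} \<in> F_ip"
proof -
  define A where "A = {s. \<delta> < dist ((T ^^ s) x) ((T ^^ s) y) \<and> \<delta> < dist ((T ^^ s) x') ((T ^^ s) y')}"
  have "A \<in> F_ip"
  proof (rule F_ip_if_translates)
    fix S assume "finite S" "S \<subseteq> A"
    have "eventually (\<lambda>n. s + n \<in> A) F" if "s \<in> insert 0 S" for s
    proof -
      have "\<delta> < dist ((T ^^ s) x') ((T ^^ s) y')"
        using that \<open>S \<subseteq> A\<close> assms(5) by (auto simp: A_def)
      then show ?thesis
        using eventually_conj[OF eventually_separated[OF assms(1-4,8,9)] eventually_separated[OF assms(3,4,3,4,10,11)]]
        by (simp add: A_def)
    qed
    then have "\<forall>s\<in>insert 0 S. eventually (\<lambda>n. s + n \<in> A) F"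
      by blast
    then have "eventually (\<lambda>n. n \<ge> 1 \<and> (\<forall>s\<in>insert 0 S. s + n \<in> A)) F"
      using \<open>finite S\<close> assms(7) by (intro eventually_conj eventually_ball_finite) auto
    then show "\<exists>n\<ge>1. (\<lambda>s. s + n) ` insert 0 S \<subseteq> A"
      using eventually_happens'[OF assms(6)] by blast
  qed
  then show ?thesis
    by (rule F_ip_mono) (auto simp: A_def)
qed

end

locale minimal_system = dynamical_system +
  assumes orbit_dense: "x \<in> X \<Longrightarrow> closure {(T ^^ n) x | n. True} = X"

lemma minimal_system_iff: "minimal_system X T \<longleftrightarrow> minimal_tds X T"
  by (auto simp: minimal_system_def minimal_system_axioms_def dynamical_system_def minimal_tds_def)

context minimal_system
begin

lemma orbit_meets_open:
  assumes "openin (top_of_set X) U" "U \<noteq> {}" "x \<in> X"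
  obtains n where "(T ^^ n) x \<in> U"
proof -
  obtain G where G: "open G" "U = X \<inter> G"
    using assms(1) by (auto simp: openin_open)
  then have "G \<inter> closure {(T ^^ n) x | n. True} \<noteq> {}"
    using assms(2,3) orbit_dense by auto
  then have "G \<inter> {(T ^^ n) x | n. True} \<noteq> {}"
    using G(1) open_Int_closure_eq_empty by blast
  then show ?thesis
    using that G(2) funpow_in[OF assms(3)] by auto
qed

lemma bounded_return_time:
  assumes "openin (top_of_set X) U" "U \<noteq> {}"
  obtains M where "\<And>x. x \<in> X \<Longrightarrow> \<exists>m\<le>M. (T ^^ m) x \<in> U"
proof -
  define V where "V m = X \<inter> (T ^^ m) -` U" for m
  have "openin (top_of_set X) (V m)" for m
    unfolding V_def using assms(1) continuous_on_funpow funpow_in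
    by (intro continuous_openin_preimage) auto
  moreover have "X \<subseteq> \<Union> (range V)"
    using orbit_meets_open[OF assms] by (auto simp: V_def) metis
  ultimately obtain K where "K \<subseteq> range V" "finite K" "X \<subseteq> \<Union>K"
    using compact_X unfolding compact_eq_openin_cover by (metis rangeE)
  then obtain N where N: "finite N" "X \<subseteq> (\<Union>m\<in>N. V m)"
    by (metis finite_subset_image)
  have "\<exists>m\<le>Max N. (T ^^ m) x \<in> U" if x: "x \<in> X" for x
  proof -
    obtain m where "m \<in> N" "(T ^^ m) x \<in> U"
      using x \<open>X \<subseteq> (\<Union>m\<in>N. V m)\<close> by (auto simp: V_def)
    then show ?thesis
      using Max_ge[OF \<open>finite N\<close>] by blast
  qed
  then show ?thesis
    using that by blast
qed

lemma invariant_open_eq: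
  assumes "openin (top_of_set X) U" "U \<noteq> {}" "T ` U \<subseteq> U"
  shows "U = X"
proof -
  obtain M where M: "\<And>x. x \<in> X \<Longrightarrow> \<exists>m\<le>M. (T ^^ m) x \<in> U"
    using bounded_return_time[OF assms(1,2)] by blast
  have "(T ^^ M) x \<in> U" if x: "x \<in> X" for x
  proof -
    obtain m where "m \<le> M" "(T ^^ m) x \<in> U"
      using M[OF x] by blast
    then have "(T ^^ (M - m)) ((T ^^ m) x) \<in> U"
      using funpow_image_subset[OF assms(3)] by blast
    then show ?thesis
      using \<open>m \<le> M\<close> by (metis funpow_add comp_apply le_add_diff_inverse2)
  qed
  then have "(T ^^ M) ` X \<subseteq> U"
    by blast
  then have "X \<subseteq> U"
    by (simp add: funpow_image_eq)
  then show ?thesis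
    using openin_subset[OF assms(1)] by auto
qed

lemma inverse_minimal:
  assumes "homeomorphism X X T Tinv"
  shows "minimal_system X Tinv"
proof -
  have Tinv: "continuous_on X Tinv" "Tinv ` X = X" "\<And>x. x \<in> X \<Longrightarrow> Tinv (T x) = x"
    using assms by (auto simp: homeomorphism_def)
  have "closure {(Tinv ^^ n) x | n. True} = X" if "x \<in> X" for x
  proof (rule ccontr)
    define D where "D = closure {(Tinv ^^ n) x | n. True}"
    assume "D \<noteq> X"
    have orbit_in: "(Tinv ^^ n) x \<in> X" for n
      using that Tinv(2) by (induction n) auto
    then have "D \<subseteq> X"
      unfolding D_def by (intro closure_minimal closed_X) auto
    have "Tinv ` {(Tinv ^^ n) x | n. True} \<subseteq> {(Tinv ^^ n) x | n. True}"
      by clarsimp (metis comp_apply funpow.simps(2))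
    moreover have "continuous_on D Tinv"
      using \<open>D \<subseteq> X\<close> continuous_on_subset[OF Tinv(1)] by blast
    ultimately have "Tinv ` D \<subseteq> D"
      unfolding D_def by (meson image_closure_subset closed_closure order_trans closure_subset)
    then have "T ` (X - D) \<subseteq> X - D"
      using Tinv(3) T_image_eq by fastforce
    moreover have "openin (top_of_set X) (X - D)"
      unfolding Diff_eq D_def by (intro openin_open_Int) auto
    moreover have "X - D \<noteq> {}"
      using \<open>D \<subseteq> X\<close> \<open>D \<noteq> X\<close> by blast
    ultimately have "X - D = X"
      by (rule invariant_open_eq[rotated 2])
    moreover have "x \<in> D"
      unfolding D_def by (rule closure_subset[THEN subsetD]) (auto intro: exI[of _ 0])
    ultimately show False
      using that by blast
  qed
  then show ?thesis
    using Tinv compact_X X_nonempty by unfold_locales (auto simp: tds_def)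
qed

lemma envelope_reaches:
  assumes "x \<in> X" "x' \<in> X"
  shows "\<exists>r\<in>envelope. r x = x'"
proof -
  have "compact ((\<lambda>r. r x) ` envelope)"
    by (intro compact_continuous_image compact_envelope continuous_on_subset[OF continuous_on_product_coordinates]) auto
  then have "closed ((\<lambda>r. r x) ` envelope)"
    by (rule compact_imp_closed)
  moreover have "{(T ^^ n) (T x) | n. True} \<subseteq> (\<lambda>r. r x) ` envelope"
  proof clarify
    fix n
    have "T x \<in> X"
      using assms(1) T_image_eq by blast
    then have eq: "(T ^^ n) (T x) = (T_ext ^^ Suc n) x"
      using assms(1) by (simp del: funpow.simps add: funpow_Suc_right T_ext_def T_ext_funpow)
    show "(T ^^ n) (T x) \<in> (\<lambda>r. r x) ` envelope"
      using eq T_ext_funpow_in_envelope[of "Suc n"] by (intro image_eqI[where x = "T_ext ^^ Suc n"]) simp_all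
  qed
  ultimately have "closure {(T ^^ n) (T x) | n. True} \<subseteq> (\<lambda>r. r x) ` envelope"
    by (rule closure_minimal[rotated])
  then show ?thesis
    using orbit_dense[of "T x"] assms T_image_eq by auto
qed

lemma envelope_idempotent_joining:
  assumes "x \<in> X" "x' \<in> X" "p \<in> envelope" "p x = p x'"
  shows "\<exists>u\<in>envelope. u \<circ> u = u \<and> u x = x' \<and> u x' = x'"
proof -
  obtain r where r: "r \<in> envelope" "r (p x) = x'"
    using envelope_reaches assms envelope_apply_in by blast
  define A where "A = envelope \<inter> {f. f x = x'} \<inter> {f. f x' = x'}"
  have "compact A"
    unfolding A_def Int_assoc
    by (intro compact_Int_closed compact_envelope closed_Int closed_Collect_eq continuous_intros) auto
  moreover have "r \<circ> p \<in> A"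
    using r assms envelope_comp by (auto simp: A_def)
  moreover have "f \<circ> g \<in> A" if "f \<in> A" "g \<in> A" for f g
    using that envelope_comp by (auto simp: A_def)
  ultimately obtain u where "u \<in> A" "u \<circ> u = u"
    using compact_semigroup_has_idempotent[of A] by blast
  then show ?thesis
    by (auto simp: A_def)
qed

lemma idempotent_fixpoints_dense:
  assumes "u \<in> envelope" "u \<circ> u = u" "openin (top_of_set X) U" "U \<noteq> {}"
  shows "\<exists>y\<in>U. u y = y"
proof -
  obtain z where "z \<in> X"
    using X_nonempty by blast
  then have "u z \<in> X"
    using assms(1) envelope_apply_in by blast
  then obtain n where n: "(T ^^ n) (u z) \<in> U"
    using orbit_meets_open[OF assms(3,4)] by blast
  have "(T ^^ n) (u z) = u ((T ^^ n) z)"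
    using envelope_commute_funpow assms(1) \<open>z \<in> X\<close> by blast
  then have "u ((T ^^ n) (u z)) = (T ^^ n) (u z)"
    using assms(2) by (metis comp_apply)
  then show ?thesis
    using n by blast
qed

lemma proximal_pair_IP_separated_neighbour:
  assumes "x \<in> X" "x' \<in> X" "proximal_pair T x x'" "\<eta> > 0" "\<eta> \<le> dist x x'"
    and "openin (top_of_set X) U" "x \<in> U"
  obtains y where "y \<in> U" "{n. \<eta> / 2 < dist ((T ^^ n) x) ((T ^^ n) y)} \<in> F_ip"
proof -
  have "x \<noteq> x'"
    using assms(4,5) by auto
  then have "\<exists>n\<ge>1. dist ((T ^^ n) x) ((T ^^ n) x') < \<epsilon>" if "\<epsilon> > 0" for \<epsilon>
    using proximal_pair_returns[OF assms(3) _ that] by blast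
  then obtain p where "p \<in> envelope" "p x = p x'"
    using envelope_collapses_proximal[OF assms(1,2)] by blast
  then obtain u where u: "u \<in> envelope" "u \<circ> u = u" "u x = x'" "u x' = x'"
    using envelope_idempotent_joining assms(1,2) by blast
  have "openin (top_of_set X) (U \<inter> ball x (\<eta> / 4))" "U \<inter> ball x (\<eta> / 4) \<noteq> {}"
    using assms(4,6,7) by (auto intro: openin_Int_open)
  then obtain y where y: "y \<in> U" "dist x y < \<eta> / 4" "u y = y"
    using idempotent_fixpoints_dense[OF u(1,2)] by (metis IntD1 IntD2 mem_ball)
  have "y \<in> X"
    using y(1) assms(6) openin_imp_subset by blast
  have "\<eta> / 2 < dist x' y"
    using assms(4,5) y(2) dist_triangle[of x x' y] dist_commute[of y x'] by linarith
  have "((\<lambda>n. (T ^^ n) x) \<longlongrightarrow> x') (returns u)" "((\<lambda>n. (T ^^ n) x') \<longlongrightarrow> x') (returns u)"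
    "((\<lambda>n. (T ^^ n) y) \<longlongrightarrow> y) (returns u)"
    using tendsto_returns_orbit[of _ u] assms(1,2) \<open>y \<in> X\<close> u(3,4) y(3) by metis+
  then have "{n. \<eta> / 2 < dist ((T ^^ n) x) ((T ^^ n) y)} \<in> F_ip"
    using separation_times_F_ip assms(1,2) \<open>y \<in> X\<close> \<open>\<eta> / 2 < dist x' y\<close>
      returns_neq_bot[OF u(1)] eventually_returns_ge_1 by blast
  then show ?thesis
    using that y(1) by blast
qed

end

lemma closed_far_fiber_points:
  fixes \<pi> :: "'a::metric_space \<Rightarrow> 'b::metric_space"
  assumes "compact X" "continuous_on X \<pi>"
  shows "closed {w\<in>X. \<exists>w'\<in>X. \<pi> w' = \<pi> w \<and> c \<le> dist w w'}"
proof -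
  define K where "K = {p\<in>X \<times> X. \<pi> (snd p) = \<pi> (fst p) \<and> c \<le> dist (fst p) (snd p)}"
  have "K = X \<times> X \<inter> ((X \<times> X \<inter> (\<lambda>p. dist (\<pi> (fst p)) (\<pi> (snd p))) -` {0})
                     \<inter> (X \<times> X \<inter> (\<lambda>p. dist (fst p) (snd p)) -` {c..}))"
    by (auto simp: K_def)
  also have "compact \<dots>"
  proof (rule compact_Int_closed[OF compact_Times[OF assms(1) assms(1)]], rule closed_Int)
    have "closed (X \<times> X)"
      using assms(1) by (intro closed_Times compact_imp_closed)
    have "continuous_on (X \<times> X) (\<lambda>p. dist (\<pi> (fst p)) (\<pi> (snd p)))"
      by (intro continuous_intros continuous_on_compose2[OF assms(2)]) auto
    then show "closed (X \<times> X \<inter> (\<lambda>p. dist (\<pi> (fst p)) (\<pi> (snd p))) -` {0})"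
      using \<open>closed (X \<times> X)\<close> by (rule continuous_closed_preimage) simp
    show "closed (X \<times> X \<inter> (\<lambda>p. dist (fst p) (snd p)) -` {c..})"
      using \<open>closed (X \<times> X)\<close> by (intro continuous_closed_preimage continuous_intros) auto
  qed
  finally have "compact (fst ` K)"
    by (intro compact_continuous_image continuous_intros)
  moreover have "fst ` K = {w\<in>X. \<exists>w'\<in>X. \<pi> w' = \<pi> w \<and> c \<le> dist w w'}"
    by (force simp: K_def)
  ultimately show ?thesis
    by (metis compact_imp_closed)
qed

lemma compact_Baire_interior:
  fixes X :: "'a::metric_space set" and C :: "nat \<Rightarrow> 'a set"
  assumes "compact X" "openin (top_of_set X) W" "W \<noteq> {}" "W \<subseteq> \<Union>(range C)"
    and "\<And>k. closedin (top_of_set X) (C k)"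
  shows "\<exists>k. top_of_set X interior_of C k \<noteq> {}"
proof (rule ccontr)
  assume "\<nexists>k. top_of_set X interior_of C k \<noteq> {}"
  moreover have "locally_compact_space (top_of_set X)" "regular_space (top_of_set X)"
    using assms(1) by (auto intro: compact_imp_locally_compact_space
        simp: compact_space_subtopology regular_space_subtopology regular_space_euclidean)
  ultimately have "top_of_set X interior_of \<Union>(range C) = {}"
    using assms(5) by (intro Baire_category_alt) auto
  moreover have "W \<subseteq> top_of_set X interior_of \<Union>(range C)"
    using assms(4,2) by (rule interior_of_maximal)
  ultimately show False
    using assms(3) by blast
qed

lemma not_almost_one_to_one_far_fibers:
  fixes \<pi> :: "'a::metric_space \<Rightarrow> 'b::metric_space"
  assumes "compact X" "continuous_on X \<pi>" "\<not> almost_one_to_one X \<pi>"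
  obtains c U where "c > 0" "openin (top_of_set X) U" "U \<noteq> {}"
    "\<And>w. w \<in> U \<Longrightarrow> \<exists>w'\<in>X. \<pi> w' = \<pi> w \<and> c \<le> dist w w'"
proof -
  define C where "C k = {w\<in>X. \<exists>w'\<in>X. \<pi> w' = \<pi> w \<and> inverse (real (Suc k)) \<le> dist w w'}" for k
  define W where "W = X - closure {x\<in>X. {x'\<in>X. \<pi> x' = \<pi> x} = {x}}"
  have "W \<noteq> {}"
    using assms(3) by (auto simp: W_def almost_one_to_one_def)
  have "openin (top_of_set X) W"
    unfolding W_def Diff_eq by (intro openin_open_Int) auto
  have "W \<subseteq> \<Union>(range C)"
  proof
    fix w assume "w \<in> W"
    then have "w \<in> X" "w \<notin> {x\<in>X. {x'\<in>X. \<pi> x' = \<pi> x} = {x}}"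
      using closure_subset[of "{x\<in>X. {x'\<in>X. \<pi> x' = \<pi> x} = {x}}"] by (auto simp: W_def)
    then obtain w' where w': "w' \<in> X" "\<pi> w' = \<pi> w" "w' \<noteq> w" "w \<in> X"
      by blast
    then obtain n where "n > 0" "inverse (real n) < dist w w'"
      using ex_inverse_of_nat_less by (metis dist_pos_lt)
    then have "w \<in> C (n - 1)"
      using w' by (auto simp: C_def intro!: bexI[of _ w'])
    then show "w \<in> \<Union>(range C)"
      by blast
  qed
  moreover have "closedin (top_of_set X) (C k)" for k
    using closed_far_fiber_points[OF assms(1,2)] by (intro closed_subset) (auto simp: C_def)
  ultimately obtain k where "top_of_set X interior_of C k \<noteq> {}"
    using compact_Baire_interior[OF assms(1)] \<open>openin (top_of_set X) W\<close> \<open>W \<noteq> {}\<close> by blast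
  then show ?thesis
    using interior_of_subset[of "top_of_set X" "C k"]
    by (intro that[of "inverse (real (Suc k))" "top_of_set X interior_of C k"]) (auto simp: C_def)
qed

lemma homeomorphism_funpow:
  assumes "homeomorphism S S f g"
  shows "homeomorphism S S (f ^^ n) (g ^^ n)"
proof (induction n)
  case 0
  then show ?case
    by (simp add: homeomorphism_ident)
next
  case (Suc n)
  have "f ^^ Suc n = f \<circ> f ^^ n" "g ^^ Suc n = g ^^ n \<circ> g"
    by (rule funpow.simps(2), rule funpow_Suc_right)
  then show ?case
    using homeomorphism_compose[OF Suc.IH assms] by (simp only:)
qed

lemma uniformly_continuous_on_common_delta:
  fixes f :: "nat \<Rightarrow> 'a::metric_space \<Rightarrow> 'b::metric_space"
  assumes "\<And>m. uniformly_continuous_on X (f m)" "c > 0"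
  shows "\<exists>\<eta>>0. \<forall>m\<le>M. \<forall>a\<in>X. \<forall>b\<in>X. dist a b < \<eta> \<longrightarrow> dist (f m a) (f m b) < c"
proof (induction M)
  case 0
  obtain \<eta> where "\<eta> > 0" "\<forall>a\<in>X. \<forall>b\<in>X. dist a b < \<eta> \<longrightarrow> dist (f 0 a) (f 0 b) < c"
    using assms unfolding uniformly_continuous_on_def by blast
  then show ?case
    by auto
next
  case (Suc M)
  obtain \<eta> where \<eta>: "\<eta> > 0" "\<forall>m\<le>M. \<forall>a\<in>X. \<forall>b\<in>X. dist a b < \<eta> \<longrightarrow> dist (f m a) (f m b) < c"
    using Suc.IH by blast
  obtain \<eta>' where \<eta>': "\<eta>' > 0" "\<forall>a\<in>X. \<forall>b\<in>X. dist a b < \<eta>' \<longrightarrow> dist (f (Suc M) a) (f (Suc M) b) < c"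
    using assms unfolding uniformly_continuous_on_def by blast
  have "\<forall>m\<le>Suc M. \<forall>a\<in>X. \<forall>b\<in>X. dist a b < min \<eta> \<eta>' \<longrightarrow> dist (f m a) (f m b) < c"
    using \<eta>(2) \<eta>'(2) by (metis le_SucE min_less_iff_conj)
  then show ?case
    using \<eta>(1) \<eta>'(1) by (intro exI[of _ "min \<eta> \<eta>'"]) simp
qed

lemma factor_map_funpow:
  assumes "factor_map X T Y S \<pi>" "T ` X \<subseteq> X" "x \<in> X"
  shows "\<pi> ((T ^^ n) x) = (S ^^ n) (\<pi> x)"
proof (induction n)
  case (Suc n)
  have "(T ^^ n) x \<in> X"
    using assms(2,3) by (induction n) auto
  then show ?case
    using Suc assms(1) by (simp add: factor_map_def)
qed simp

lemma far_fiber_mate_pullback: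
  assumes "homeomorphism X X T Tinv" "factor_map X T Y S \<pi>" "z \<in> X"
    and "w' \<in> X" "\<pi> w' = \<pi> ((Tinv ^^ m) z)" "c \<le> dist ((Tinv ^^ m) z) w'"
    and "\<forall>a\<in>X. \<forall>b\<in>X. dist a b < \<eta> \<longrightarrow> dist ((Tinv ^^ m) a) ((Tinv ^^ m) b) < c"
  shows "\<exists>z'\<in>X. \<pi> z' = \<pi> z \<and> \<eta> \<le> dist z z'"
proof -
  have hom: "homeomorphism X X (T ^^ m) (Tinv ^^ m)"
    using assms(1) by (rule homeomorphism_funpow)
  then have z: "(T ^^ m) ((Tinv ^^ m) z) = z" "(Tinv ^^ m) z \<in> X"
    and w': "(T ^^ m) w' \<in> X" "(Tinv ^^ m) ((T ^^ m) w') = w'"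
    using assms(3,4) by (auto simp: homeomorphism_def)
  have "T ` X \<subseteq> X"
    using assms(1) by (simp add: homeomorphism_def)
  then have "\<pi> ((T ^^ m) w') = \<pi> ((T ^^ m) ((Tinv ^^ m) z))"
    using factor_map_funpow[OF assms(2)] assms(4,5) z(2) by simp
  moreover have "\<eta> \<le> dist z ((T ^^ m) w')"
  proof (rule ccontr)
    assume "\<not> \<eta> \<le> dist z ((T ^^ m) w')"
    then have "dist ((Tinv ^^ m) z) ((Tinv ^^ m) ((T ^^ m) w')) < c"
      using assms(3,7) w'(1) by simp
    then show False
      using assms(6) w'(2) by simp
  qed
  ultimately show ?thesis
    using w'(1) z(1) by auto
qed

lemma uniformly_far_fibers:
  assumes "minimal_tds X T" "homeomorphism X X T Tinv" "factor_map X T Y S \<pi>"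
    and "\<not> almost_one_to_one X \<pi>"
  obtains \<eta> where "\<eta> > 0" "\<And>z. z \<in> X \<Longrightarrow> \<exists>z'\<in>X. \<pi> z' = \<pi> z \<and> \<eta> \<le> dist z z'"
proof -
  interpret minimal_system X T
    using assms(1) by (simp add: minimal_system_iff)
  interpret inverse: minimal_system X Tinv
    using assms(2) by (rule inverse_minimal)
  have "continuous_on X \<pi>"
    using assms(3) by (simp add: factor_map_def)
  then obtain c U where "c > 0" "openin (top_of_set X) U" "U \<noteq> {}"
    and far: "\<And>w. w \<in> U \<Longrightarrow> \<exists>w'\<in>X. \<pi> w' = \<pi> w \<and> c \<le> dist w w'"
    using not_almost_one_to_one_far_fibers[OF compact_X _ assms(4)] by blast
  obtain M where M: "\<And>z. z \<in> X \<Longrightarrow> \<exists>m\<le>M. (Tinv ^^ m) z \<in> U"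
    using inverse.bounded_return_time[OF \<open>openin (top_of_set X) U\<close> \<open>U \<noteq> {}\<close>] by blast
  have "uniformly_continuous_on X (Tinv ^^ m)" for m
    using homeomorphism_funpow[OF assms(2), of m]
    by (intro compact_uniformly_continuous compact_X) (auto simp: homeomorphism_def)
  then obtain \<eta> where "\<eta> > 0"
    and \<eta>: "\<forall>m\<le>M. \<forall>a\<in>X. \<forall>b\<in>X. dist a b < \<eta> \<longrightarrow> dist ((Tinv ^^ m) a) ((Tinv ^^ m) b) < c"
    using uniformly_continuous_on_common_delta[of X "\<lambda>m. Tinv ^^ m", OF _ \<open>c > 0\<close>] by blast
  have "\<exists>z'\<in>X. \<pi> z' = \<pi> z \<and> \<eta> \<le> dist z z'" if z: "z \<in> X" for z
  proof -
    obtain m where "m \<le> M" "(Tinv ^^ m) z \<in> U"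
      using M[OF z] by blast
    then obtain w' where "w' \<in> X" "\<pi> w' = \<pi> ((Tinv ^^ m) z)" "c \<le> dist ((Tinv ^^ m) z) w'"
      using far by blast
    then show ?thesis
      using far_fiber_mate_pullback[OF assms(2,3) z] \<eta> \<open>m \<le> M\<close> by blast
  qed
  then show ?thesis
    using that \<open>\<eta> > 0\<close> by blast
qed

theorem proposition4p7:
  fixes X :: "'a::metric_space set" and T :: "'a \<Rightarrow> 'a"
    and Y :: "'b::metric_space set" and S :: "'b \<Rightarrow> 'b" and \<pi> :: "'a \<Rightarrow> 'b"
  assumes "minimal_tds X T" and "minimal_tds Y S"
    and "\<exists>Tinv. homeomorphism X X T Tinv"
    and "factor_map X T Y S \<pi>"
    and "proximal_factor X T \<pi>"
    and "\<not> almost_one_to_one X \<pi>"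
  shows "strongly_Fip_sensitive X T"
proof -
  interpret minimal_system X T
    using assms(1) by (simp add: minimal_system_iff)
  obtain Tinv where "homeomorphism X X T Tinv"
    using assms(3) by blast
  then obtain \<eta> where "\<eta> > 0" and far: "\<And>z. z \<in> X \<Longrightarrow> \<exists>z'\<in>X. \<pi> z' = \<pi> z \<and> \<eta> \<le> dist z z'"
    using uniformly_far_fibers assms(1,4,6) by blast
  have "\<exists>x\<in>U. \<exists>y\<in>U. {n. \<eta> / 2 < dist ((T ^^ n) x) ((T ^^ n) y)} \<in> F_ip"
    if U: "openin (top_of_set X) U" "U \<noteq> {}" for U
  proof -
    obtain x where x: "x \<in> U" "x \<in> X"
      using U openin_imp_subset by blast
    then obtain x' where x': "x' \<in> X" "\<pi> x' = \<pi> x" "\<eta> \<le> dist x x'"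
      using far by blast
    then have "proximal_pair T x x'"
      using assms(5) x(2) by (auto simp: proximal_factor_def)
    then obtain y where "y \<in> U" "{n. \<eta> / 2 < dist ((T ^^ n) x) ((T ^^ n) y)} \<in> F_ip"
      using proximal_pair_IP_separated_neighbour[OF x(2) x'(1) _ \<open>\<eta> > 0\<close> x'(3) U(1) x(1)] by blast
    then show ?thesis
      using x(1) by blast
  qed
  then show ?thesis
    using \<open>\<eta> > 0\<close> unfolding strongly_Fip_sensitive_def by (intro exI[of _ "\<eta> / 2"]) auto
qed

end
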